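(* Let $R$ be the holistic system robustness random variable (defined in the context), with distribution $\pi_R$, so that $\mathbb{P}_{\pi_R}[-R\le a]=1$. Let $\epsilon\in(0,1)$, $\gamma\in[0,1)$, $\alpha\in(0,1]$, and define \[ L(x,\mu,t)=t\left(\mu+e^{\frac{x}{t}-\mu-\ln(\alpha)-1}\right),\qquad u_b(\mu,t)=L(a,\mu,t). \] Let $r_1,\dots,r_N$ be independent samples of $R$ with $N\ge\frac{\log(1-\gamma)}{\log(1-\epsilon)}$, and $\zeta^*_N(\mu,t)=\max_{1\le k\le N}L(-r_k,\mu,t)$. Then \[ \mathbb{P}^N_{\pi_R}\left[r^*_E\triangleq\inf_{\mu\in\mathbb{R},\ t>0}\zeta^*_N(\mu,t)(1-\epsilon)+u_b(\mu,t)\epsilon\ \ge\ \mathrm{EVaR}_\alpha(-R)\right]\ge\gamma. \]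
   Context: System setting: $\dot x = f(x,u)+\xi$, $x\in\mathcal{X}\subset\mathbb{R}^n$, $u=U(x,\theta)\in\mathcal{U}\subset\mathbb{R}^m$, $\theta\in\Theta\subset\mathbb{R}^p$ a parameter fixed along a trajectory, and $\xi$ stochastic noise with unknown distribution $\pi_\xi(x,u,t)$. $x^\theta$ denotes the resulting closed-loop state signal in $\mathcal{S}=\{s:\mathbb{R}_{\ge0}\to\mathbb{R}^n\}$ from an initial condition $x_0\in\mathcal{X}_0\subseteq\mathcal{X}$. A robustness metric is a function $\rho:\mathcal{S}\to[-a,b]$ with $a,b>0$ such that $\rho(s)\ge0$ only for signals exhibiting desired properties. The holistic system robustness $R$ is the scalar random variable whose samples are $r=\rho(x^\theta)$, where $(x_0,\theta)$ is sampled uniformly from $\mathcal{X}_0\times\Theta$. $\mathrm{EVaR}_\alpha(Z)=\inf_{z>0}\frac1z\ln\left(\frac{\mathbb{E}[e^{zZ}]}{\alpha}\right)$. $\zeta^*_N(\mu,t)$ is the solution of $\min_\zeta\zeta$ s.t. $\zeta\ge L(-r_i,\mu,t)$ for all $i$; $\mathbb{P}^N_{\pi_R}$ is the $N$-fold product measure of the i.i.d. sample. *)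

theory Defs
  imports "HOL-Probability.Probability"
begin

definition Lfun :: "real \<Rightarrow> real \<Rightarrow> real \<Rightarrow> real \<Rightarrow> real" where
  "Lfun \<alpha> x \<mu> t = t * (\<mu> + exp (x / t - \<mu> - ln \<alpha> - 1))"

definition EVaR :: "'a measure \<Rightarrow> real \<Rightarrow> ('a \<Rightarrow> real) \<Rightarrow> real" where
  "EVaR M \<alpha> Z = (INF z\<in>{0<..}. (1 / z) * ln ((\<integral>\<omega>. exp (z * Z \<omega>) \<partial>M) / \<alpha>))"

definition zeta_star :: "real \<Rightarrow> nat \<Rightarrow> (nat \<Rightarrow> real) \<Rightarrow> real \<Rightarrow> real \<Rightarrow> real" where
  "zeta_star \<alpha> N r \<mu> t = Max ((\<lambda>k. Lfun \<alpha> (- r k) \<mu> t) ` {..<N})"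

definition rE_star :: "real \<Rightarrow> real \<Rightarrow> real \<Rightarrow> nat \<Rightarrow> (nat \<Rightarrow> real) \<Rightarrow> real" where
  "rE_star \<alpha> a \<epsilon> N r =
     (INF p\<in>UNIV \<times> {0<..}. zeta_star \<alpha> N r (fst p) (snd p) * (1 - \<epsilon>) + Lfun \<alpha> a (fst p) (snd p) * \<epsilon>)"

end

theory Submission imports Defs begin

text \<open>Let c be an \<open>\<epsilon>\<close>-quantile of R. For every \<open>\<mu>\<close> and \<open>t > 0\<close> the inequality
  \<open>ln y \<le> \<mu> + exp (-\<mu> - 1) y\<close> gives \<open>EVaR\<^sub>\<alpha>(Z) \<le> E[L(Z,\<mu>,t)]\<close>. Since L is increasing in its
  first argument and \<open>-R \<le> a\<close>, splitting the expectation at c yields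
  \<open>E[L(-R,\<mu>,t)] \<le> L(-c,\<mu>,t)(1-\<epsilon>) + L(a,\<mu>,t)\<epsilon>\<close>. If some sample satisfies \<open>r\<^sub>k \<le> c\<close> then
  \<open>L(-c,\<mu>,t) \<le> \<zeta>\<^sup>*\<^sub>N(\<mu>,t)\<close>, so \<open>r\<^sup>*\<^sub>E \<ge> EVaR\<^sub>\<alpha>(-R)\<close>; and all N samples exceed c only with
  probability at most \<open>(1-\<epsilon>)\<^sup>N \<le> 1-\<gamma>\<close>.\<close>

lemma ln_le_linear_exp:
  fixes y \<mu> :: real
  assumes "0 < y"
  shows "ln y \<le> \<mu> + exp (- \<mu> - 1) * y"
proof -
  have "ln y = \<mu> + 1 + ln (exp (- \<mu> - 1) * y)"
    using assms by (simp add: ln_mult)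
  also have "\<dots> \<le> \<mu> + 1 + (exp (- \<mu> - 1) * y - 1)"
    using assms by (intro add_left_mono ln_le_minus_one) simp
  finally show ?thesis by simp
qed

lemma power_le_of_ln_div_le:
  fixes p q :: real
  assumes "0 < q" "q < 1" "0 < p" "ln p / ln q \<le> real N"
  shows "q ^ N \<le> p"
proof -
  have "real N * ln q \<le> ln p"
    using assms by (simp add: divide_le_eq)
  then have "exp (real N * ln q) \<le> exp (ln p)" by simp
  then show ?thesis using assms(1,3) by (simp add: exp_of_nat_mult)
qed

lemma Lfun_eq_exp:
  "Lfun \<alpha> x \<mu> t = t * \<mu> + t * exp (- \<mu> - ln \<alpha> - 1) * exp (x / t)"
  by (simp add: Lfun_def exp_add [symmetric] algebra_simps)

lemma Lfun_mono:
  assumes "0 < t" "x \<le> y"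
  shows "Lfun \<alpha> x \<mu> t \<le> Lfun \<alpha> y \<mu> t"
  using assms by (simp add: Lfun_eq_exp divide_right_mono)

lemma (in prob_space) integrable_exp_bounded_above:
  fixes Z :: "'a \<Rightarrow> real"
  assumes "Z \<in> borel_measurable M" "AE \<omega> in M. Z \<omega> \<le> hi"
  shows "integrable M (\<lambda>\<omega>. exp (Z \<omega>))"
  by (rule integrable_const_bound [where B = "exp hi"])
     (use assms in \<open>auto elim!: eventually_mono\<close>)

lemma (in prob_space) integral_Lfun:
  fixes Z :: "'a \<Rightarrow> real"
  assumes "Z \<in> borel_measurable M" "AE \<omega> in M. Z \<omega> \<le> hi" "0 < t"
  shows "integrable M (\<lambda>\<omega>. Lfun \<alpha> (Z \<omega>) \<mu> t)"
    and "(\<integral>\<omega>. Lfun \<alpha> (Z \<omega>) \<mu> t \<partial>M)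
           = t * \<mu> + t * exp (- \<mu> - ln \<alpha> - 1) * (\<integral>\<omega>. exp (1 / t * Z \<omega>) \<partial>M)"
proof -
  have "AE \<omega> in M. 1 / t * Z \<omega> \<le> 1 / t * hi"
    using assms(2,3) by (auto elim!: eventually_mono intro: divide_right_mono)
  then have exp_int: "integrable M (\<lambda>\<omega>. exp (1 / t * Z \<omega>))"
    using assms(1) by (intro integrable_exp_bounded_above) auto
  then show "integrable M (\<lambda>\<omega>. Lfun \<alpha> (Z \<omega>) \<mu> t)"
    by (simp add: Lfun_eq_exp)
  show "(\<integral>\<omega>. Lfun \<alpha> (Z \<omega>) \<mu> t \<partial>M)
          = t * \<mu> + t * exp (- \<mu> - ln \<alpha> - 1) * (\<integral>\<omega>. exp (1 / t * Z \<omega>) \<partial>M)"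
    using exp_int by (simp add: Lfun_eq_exp prob_space)
qed

lemma (in prob_space) EVaR_le_integral_Lfun:
  fixes Z :: "'a \<Rightarrow> real"
  assumes Z: "Z \<in> borel_measurable M" and bounds: "AE \<omega> in M. lo \<le> Z \<omega> \<and> Z \<omega> \<le> hi"
    and \<alpha>: "0 < \<alpha>" "\<alpha> \<le> 1" and t: "0 < t"
  shows "EVaR M \<alpha> Z \<le> (\<integral>\<omega>. Lfun \<alpha> (Z \<omega>) \<mu> t \<partial>M)"
proof -
  have mgf_lower: "exp (z * lo) \<le> (\<integral>\<omega>. exp (z * Z \<omega>) \<partial>M)" if z: "0 < z" for z
  proof -
    have "AE \<omega> in M. z * Z \<omega> \<le> z * hi"
      using bounds z by (auto elim!: eventually_mono)
    then have "integrable M (\<lambda>\<omega>. exp (z * Z \<omega>))"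
      using Z by (intro integrable_exp_bounded_above) auto
    then have "(\<integral>\<omega>. exp (z * lo) \<partial>M) \<le> (\<integral>\<omega>. exp (z * Z \<omega>) \<partial>M)"
      by (intro integral_mono_AE) (use bounds z in \<open>auto elim!: eventually_mono\<close>)
    then show ?thesis by (simp add: prob_space)
  qed
  have mgf_pos: "0 < (\<integral>\<omega>. exp (z * Z \<omega>) \<partial>M)" if "0 < z" for z
    using mgf_lower [OF that] by (rule less_le_trans [OF exp_gt_zero])
  have "lo \<le> (1 / z) * ln ((\<integral>\<omega>. exp (z * Z \<omega>) \<partial>M) / \<alpha>)" if z: "0 < z" for z
  proof -
    have "exp (z * lo) \<le> (\<integral>\<omega>. exp (z * Z \<omega>) \<partial>M)" by (rule mgf_lower [OF z])
    also have "\<dots> \<le> (\<integral>\<omega>. exp (z * Z \<omega>) \<partial>M) / \<alpha>"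
      using mgf_pos [OF z] \<alpha> by (simp add: le_divide_eq)
    finally have "z * lo \<le> ln ((\<integral>\<omega>. exp (z * Z \<omega>) \<partial>M) / \<alpha>)"
      using mgf_pos [OF z] \<alpha> by (subst ln_ge_iff) auto
    then show ?thesis using z by (simp add: field_simps)
  qed
  then have "EVaR M \<alpha> Z \<le> (1 / (1 / t)) * ln ((\<integral>\<omega>. exp (1 / t * Z \<omega>) \<partial>M) / \<alpha>)"
    unfolding EVaR_def using t by (intro cINF_lower bdd_belowI [where m = lo]) auto
  also have "\<dots> = t * ln ((\<integral>\<omega>. exp (1 / t * Z \<omega>) \<partial>M) / \<alpha>)" by simp
  also have "\<dots> \<le> t * (\<mu> + exp (- \<mu> - 1) * ((\<integral>\<omega>. exp (1 / t * Z \<omega>) \<partial>M) / \<alpha>))"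
    using t \<alpha> mgf_pos [of "1 / t"] by (intro mult_left_mono ln_le_linear_exp) auto
  also have "\<dots> = t * \<mu> + t * exp (- \<mu> - ln \<alpha> - 1) * (\<integral>\<omega>. exp (1 / t * Z \<omega>) \<partial>M)"
    using \<alpha> by (simp add: exp_diff exp_add algebra_simps)
  also have "\<dots> = (\<integral>\<omega>. Lfun \<alpha> (Z \<omega>) \<mu> t \<partial>M)"
    using bounds by (intro integral_Lfun(2) [OF Z _ t, symmetric, where hi = hi]) (auto elim!: eventually_mono)
  finally show ?thesis .
qed

lemma (in prob_space) integral_le_two_level:
  fixes f :: "'a \<Rightarrow> real"
  assumes f: "integrable M f" and S: "S \<in> events" "prob S \<le> e" "e \<le> 1"
    and le_U: "AE x in M. f x \<le> U" and le_W: "AE x in M. x \<notin> S \<longrightarrow> f x \<le> W"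
  shows "expectation f \<le> W * (1 - e) + U * e"
proof (cases "U \<le> W")
  case True
  have "expectation f \<le> expectation (\<lambda>_. U)"
    using f le_U by (intro integral_mono_AE) auto
  also have "\<dots> \<le> W * (1 - e) + U * e"
    using True S(3) mult_right_mono [of U W "1 - e"] by (simp add: prob_space algebra_simps)
  finally show ?thesis .
next
  case False
  have ind: "integrable M (\<lambda>x. (U - W) * indicator S x)"
    using S(1) by (intro integrable_mult_right integrable_real_indicator) (auto simp: emeasure_eq_measure)
  have "expectation f \<le> expectation (\<lambda>x. W + (U - W) * indicator S x)"
    using f ind le_U le_W False by (intro integral_mono_AE) (auto elim!: eventually_mono split: split_indicator)
  also have "\<dots> = expectation (\<lambda>_. W) + expectation (\<lambda>x. (U - W) * indicator S x)"
    using ind by (intro Bochner_Integration.integral_add) auto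
  also have "\<dots> = W + (U - W) * prob S"
    using S(1) by (simp add: prob_space)
  also have "\<dots> \<le> W + (U - W) * e"
    using False S(2) by simp
  finally show ?thesis by (simp add: algebra_simps)
qed

lemma (in real_distribution) exists_quantile:
  assumes "0 < e" "e < 1"
  obtains c where "measure M {..<c} \<le> e" and "measure M {c<..} \<le> 1 - e"
proof -
  define S where "S = {x. cdf M x \<ge> e}"
  have "eventually (\<lambda>x. cdf M x > e) at_top"
    using cdf_lim_at_top_prob assms(2) by (rule order_tendstoD)
  then obtain x1 where "cdf M x1 > e" by (metis eventually_at_top_linorder order_refl)
  then have S_ne: "S \<noteq> {}" by (auto simp: S_def intro: less_imp_le)
  have "eventually (\<lambda>x. cdf M x < e) at_bot"
    using cdf_lim_at_bot assms(1) by (rule order_tendstoD)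
  then obtain x0 where x0: "cdf M x0 < e" by (metis eventually_at_bot_linorder order_refl)
  have S_bdd: "bdd_below S"
  proof
    fix x assume "x \<in> S"
    then show "x0 \<le> x" using x0 cdf_nondecreasing [of x x0] by (cases "x \<le> x0") (auto simp: S_def)
  qed
  define c where "c = Inf S"
  have "e \<le> cdf M c"
  proof (rule tendsto_lowerbound)
    show "(cdf M \<longlongrightarrow> cdf M c) (at_right c)"
      using cdf_is_right_cont by (simp add: continuous_within)
    show "\<forall>\<^sub>F x in at_right c. e \<le> cdf M x"
      using eventually_at_right_less
    proof (rule eventually_mono)
      fix x assume "c < x"
      then obtain y where "y \<in> S" "y < x" using cInf_less_iff [OF S_ne S_bdd] c_def by auto
      then show "e \<le> cdf M x" using cdf_nondecreasing [of y x] by (auto simp: S_def)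
    qed
  qed simp
  then have "measure M {c<..} \<le> 1 - e"
    using prob_compl [of "{..c}"] by (simp add: cdf_def Compl_eq_Diff_UNIV [symmetric] not_le)
  moreover have "measure M {..<c} \<le> e"
  proof (rule tendsto_upperbound)
    show "(cdf M \<longlongrightarrow> measure M {..<c}) (at_left c)" by (rule cdf_at_left)
    show "\<forall>\<^sub>F x in at_left c. cdf M x \<le> e"
      using eventually_at_left_real [of "c - 1" c]
    proof (rule eventually_mono)
      fix x assume "x \<in> {c - 1<..<c}"
      then have "x \<notin> S" using cInf_lower [OF _ S_bdd] c_def by force
      then show "cdf M x \<le> e" by (auto simp: S_def)
    qed simp
  qed simp
  ultimately show ?thesis using that by blast
qed

lemma (in real_distribution) EVaR_neg_le_Lfun_split:
  assumes bounds: "AE x in M. - a \<le> x \<and> x \<le> b"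
    and \<alpha>: "0 < \<alpha>" "\<alpha> \<le> 1" and t: "0 < t"
    and c: "measure M {..<c} \<le> e" and e: "e \<le> 1"
  shows "EVaR M \<alpha> (\<lambda>x. - x) \<le> Lfun \<alpha> (- c) \<mu> t * (1 - e) + Lfun \<alpha> a \<mu> t * e"
proof -
  have neg_meas: "(\<lambda>x. - x) \<in> borel_measurable M" by simp
  have neg_le_a: "AE x in M. - x \<le> a" using bounds by (auto elim!: eventually_mono)
  have "EVaR M \<alpha> (\<lambda>x. - x) \<le> (\<integral>x. Lfun \<alpha> (- x) \<mu> t \<partial>M)"
    using bounds by (intro EVaR_le_integral_Lfun [OF neg_meas _ \<alpha> t, where lo = "- b" and hi = a])
      (auto elim!: eventually_mono)
  also have "\<dots> \<le> Lfun \<alpha> (- c) \<mu> t * (1 - e) + Lfun \<alpha> a \<mu> t * e"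
  proof (rule integral_le_two_level [where S = "{..<c}"])
    show "integrable M (\<lambda>x. Lfun \<alpha> (- x) \<mu> t)"
      by (rule integral_Lfun(1) [OF neg_meas neg_le_a t])
    show "AE x in M. Lfun \<alpha> (- x) \<mu> t \<le> Lfun \<alpha> a \<mu> t"
      using neg_le_a by (auto elim!: eventually_mono intro: Lfun_mono [OF t])
    show "AE x in M. x \<notin> {..<c} \<longrightarrow> Lfun \<alpha> (- x) \<mu> t \<le> Lfun \<alpha> (- c) \<mu> t"
      by (intro AE_I2 impI Lfun_mono [OF t]) simp
  qed (use c e in auto)
  finally show ?thesis .
qed

lemma (in prob_space) prob_PiM_not_all_in:
  assumes "finite I" "S \<in> events"
  shows "measure (PiM I (\<lambda>_. M)) (space (PiM I (\<lambda>_. M)) - PiE I (\<lambda>_. S)) = 1 - prob S ^ card I"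
proof -
  interpret P: product_prob_space "\<lambda>_. M" I by unfold_locales
  have all_in: "PiE I (\<lambda>_. S) \<in> sets (PiM I (\<lambda>_. M))"
    using assms by (intro sets_PiM_I_finite) auto
  have "emeasure (PiM I (\<lambda>_. M)) (PiE I (\<lambda>_. S)) = (\<Prod>i\<in>I. emeasure M S)"
    using assms by (intro P.emeasure_PiM) auto
  also have "\<dots> = ennreal (prob S ^ card I)"
    by (simp add: emeasure_eq_measure ennreal_power prod_ennreal)
  finally have "measure (PiM I (\<lambda>_. M)) (PiE I (\<lambda>_. S)) = prob S ^ card I"
    by (simp add: measure_def)
  then show ?thesis using P.prob_compl [OF all_in] by simp
qed

lemma le_rE_star_if_sample_le:
  assumes "k < N" "r k \<le> c" "\<epsilon> \<le> 1"
    and bound: "\<And>\<mu> t. 0 < t \<Longrightarrow> v \<le> Lfun \<alpha> (- c) \<mu> t * (1 - \<epsilon>) + Lfun \<alpha> a \<mu> t * \<epsilon>"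
  shows "v \<le> rE_star \<alpha> a \<epsilon> N r"
  unfolding rE_star_def
proof (rule cINF_greatest)
  fix p :: "real \<times> real"
  assume "p \<in> UNIV \<times> {0<..}"
  then obtain \<mu> t where p: "p = (\<mu>, t)" and t: "0 < t" by auto
  have "Lfun \<alpha> (- c) \<mu> t \<le> Lfun \<alpha> (- r k) \<mu> t"
    using assms(2) by (intro Lfun_mono [OF t]) simp
  also have "\<dots> \<le> zeta_star \<alpha> N r \<mu> t"
    unfolding zeta_star_def using assms(1) by (intro Max_ge) auto
  finally have "Lfun \<alpha> (- c) \<mu> t * (1 - \<epsilon>) \<le> zeta_star \<alpha> N r \<mu> t * (1 - \<epsilon>)"
    using assms(3) by (intro mult_right_mono) auto
  with bound [of t \<mu>, OF t] show "v \<le> zeta_star \<alpha> N r (fst p) (snd p) * (1 - \<epsilon>) + Lfun \<alpha> a (fst p) (snd p) * \<epsilon>"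
    by (simp add: p)
qed simp

theorem corollary8:
  fixes \<pi>R :: "real measure" and a b \<epsilon> \<gamma> \<alpha> :: real and N :: nat
  assumes "prob_space \<pi>R"
    and "sets \<pi>R = sets borel"
    and "a > 0" and "b > 0"
    and "AE r in \<pi>R. - a \<le> r \<and> r \<le> b"
    and "0 < \<epsilon>" and "\<epsilon> < 1"
    and "0 \<le> \<gamma>" and "\<gamma> < 1"
    and "0 < \<alpha>" and "\<alpha> \<le> 1"
    and "real N \<ge> ln (1 - \<gamma>) / ln (1 - \<epsilon>)"
  shows "\<exists>A \<in> sets (PiM {..<N} (\<lambda>_. \<pi>R)).
           A \<subseteq> {r \<in> space (PiM {..<N} (\<lambda>_. \<pi>R)).
                   rE_star \<alpha> a \<epsilon> N r \<ge> EVaR \<pi>R \<alpha> (\<lambda>x. - x)}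
         \<and> measure (PiM {..<N} (\<lambda>_. \<pi>R)) A \<ge> \<gamma>"
proof -
  interpret R: real_distribution \<pi>R
    using assms(1,2) by (simp add: real_distribution_def real_distribution_axioms_def)
  obtain c where c_low: "measure \<pi>R {..<c} \<le> \<epsilon>" and c_high: "measure \<pi>R {c<..} \<le> 1 - \<epsilon>"
    using R.exists_quantile assms(6,7) by blast
  define P where "P = PiM {..<N} (\<lambda>_. \<pi>R)"
  define A where "A = space P - PiE {..<N} (\<lambda>_. {c<..})"
  have "A \<in> sets P"
    unfolding A_def P_def by (intro sets.compl_sets sets_PiM_I_finite) auto
  moreover have "\<gamma> \<le> measure P A"
  proof -
    have "measure \<pi>R {c<..} ^ N \<le> (1 - \<epsilon>) ^ N"
      using c_high by (intro power_mono) auto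
    also have "\<dots> \<le> 1 - \<gamma>"
      using assms(6,7,9,12) by (intro power_le_of_ln_div_le) auto
    finally show ?thesis
      using R.prob_PiM_not_all_in [of "{..<N}" "{c<..}"] by (simp add: A_def P_def)
  qed
  moreover have "A \<subseteq> {r \<in> space P. rE_star \<alpha> a \<epsilon> N r \<ge> EVaR \<pi>R \<alpha> (\<lambda>x. - x)}"
  proof
    fix r assume r: "r \<in> A"
    then have "r \<in> extensional {..<N}" "r \<notin> PiE {..<N} (\<lambda>_. {c<..})"
      by (auto simp: A_def P_def space_PiM PiE_def)
    then obtain k where "k < N" "r k \<le> c"
      by (force simp: PiE_def not_less)
    then have "EVaR \<pi>R \<alpha> (\<lambda>x. - x) \<le> rE_star \<alpha> a \<epsilon> N r"
      using R.EVaR_neg_le_Lfun_split [OF assms(5,10,11) _ c_low] assms(7)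
      by (intro le_rE_star_if_sample_le) auto
    with r show "r \<in> {r \<in> space P. rE_star \<alpha> a \<epsilon> N r \<ge> EVaR \<pi>R \<alpha> (\<lambda>x. - x)}"
      by (simp add: A_def)
  qed
  ultimately show ?thesis unfolding P_def by blast
qed

end
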